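(* Let $w:[0,1]\to[0,1]$ be continuous and strictly increasing with $w(0)=0$ and $w(1)=1$. Suppose that for all $0\le a_1<c_1<b<c_2<a_2\le 1$ satisfying $(a_2-b)(b-c_1)=(b-a_1)(c_2-b)$ we have $$[w(a_2)-w(b)]\,[w(b)-w(c_1)]=[w(b)-w(a_1)]\,[w(c_2)-w(b)].$$ Then $w(p)=p$ for all $p\in[0,1]$. *)

theory Defs
  imports "HOL-Analysis.Analysis"
begin

end

theory Submission
  imports Defs
begin

text \<open>Apply the condition with equally spaced points c - 3e, ..., c + 3e, all inside
  [0, 1]; four instances force the two increments of w adjacent to c to coincide, i.e.
  w (c + e) + w (c - e) = 2 w c. So w - id is continuous, vanishes at 0 and 1, and satisfies
  the midpoint equation at every interior point for some step; by a maximum principle it is zero.\<close>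

lemma local_midpoint_convex_le_zero:
  fixes g :: "real \<Rightarrow> real"
  assumes cont: "continuous_on {a..b} g"
    and ga: "g a \<le> 0" and gb: "g b \<le> 0"
    and mid: "\<And>c. a < c \<Longrightarrow> c < b \<Longrightarrow>
               \<exists>e>0. a \<le> c - e \<and> c + e \<le> b \<and> 2 * g c \<le> g (c + e) + g (c - e)"
    and x: "x \<in> {a..b}"
  shows "g x \<le> 0"
proof -
  have "{a..b} \<noteq> {}" using x by auto
  then obtain xm where xm: "xm \<in> {a..b}" and max: "\<And>y. y \<in> {a..b} \<Longrightarrow> g y \<le> g xm"
    using continuous_attains_sup[of "{a..b}" g] cont by auto
  define M where "M = g xm"
  define S where "S = {y \<in> {a..b}. g y = M}"
  have "S \<noteq> {}" using xm unfolding S_def M_def by auto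
  moreover have bdd: "bdd_below S" unfolding S_def by (rule bdd_belowI[of _ a]) auto
  moreover have "closed S" unfolding S_def
    by (rule continuous_closed_preimage_constant[OF cont]) auto
  ultimately have "Inf S \<in> S" by (rule closed_contains_Inf)
  define x0 where "x0 = Inf S"
  have x0: "x0 \<in> {a..b}" "g x0 = M" using \<open>Inf S \<in> S\<close> unfolding S_def x0_def by auto
  have "M \<le> 0"
  proof (rule ccontr)
    assume "\<not> M \<le> 0"
    \<comment> \<open>Then the leftmost maximiser x0 is interior, and the midpoint inequality at x0
      fails because g (x0 - e) < M strictly.\<close>
    with x0 ga gb have "x0 \<noteq> a" "x0 \<noteq> b" by auto
    with x0 have "a < x0" "x0 < b" by auto
    then obtain e where e: "e > 0" "a \<le> x0 - e" "x0 + e \<le> b"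
      and sub: "2 * g x0 \<le> g (x0 + e) + g (x0 - e)"
      using mid by blast
    have "g (x0 + e) \<le> M" using max[of "x0 + e"] e \<open>a < x0\<close> unfolding M_def by auto
    moreover have "g (x0 - e) < M"
    proof -
      have left: "x0 - e \<in> {a..b}" using e \<open>x0 < b\<close> by auto
      have "x0 - e \<notin> S"
        using cInf_lower[OF _ bdd, of "x0 - e"] e unfolding x0_def by auto
      with left max[OF left] show ?thesis unfolding S_def M_def by auto
    qed
    ultimately show False using sub x0 by simp
  qed
  thus ?thesis using max[OF x] unfolding M_def by simp
qed

lemma local_midpoint_affine_eq_zero:
  fixes g :: "real \<Rightarrow> real"
  assumes cont: "continuous_on {a..b} g"
    and ga: "g a = 0" and gb: "g b = 0"
    and mid: "\<And>c. a < c \<Longrightarrow> c < b \<Longrightarrow>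
               \<exists>e>0. a \<le> c - e \<and> c + e \<le> b \<and> g (c + e) + g (c - e) = 2 * g c"
    and x: "x \<in> {a..b}"
  shows "g x = 0"
proof -
  have "g x \<le> 0"
  proof (rule local_midpoint_convex_le_zero[OF cont _ _ _ x])
    fix c assume "a < c" "c < b"
    then show "\<exists>e>0. a \<le> c - e \<and> c + e \<le> b \<and> 2 * g c \<le> g (c + e) + g (c - e)"
      using mid by fastforce
  qed (use ga gb in auto)
  moreover have "- g x \<le> 0"
  proof (rule local_midpoint_convex_le_zero[where g = "\<lambda>y. - g y", OF _ _ _ _ x])
    show "continuous_on {a..b} (\<lambda>y. - g y)" using cont by (intro continuous_intros)
    fix c assume "a < c" "c < b"
    then obtain e where "e > 0" "a \<le> c - e" "c + e \<le> b" "g (c + e) + g (c - e) = 2 * g c"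
      using mid by blast
    then show "\<exists>e>0. a \<le> c - e \<and> c + e \<le> b \<and> 2 * - g c \<le> - g (c + e) + - g (c - e)"
      by (intro exI[of _ e]) auto
  qed (use ga gb in auto)
  ultimately show ?thesis by simp
qed

text \<open>A, ..., F are the successive increments of w along seven equally spaced points; the
  hypotheses are the proportionality condition for four choices of the points.\<close>

lemma central_increments_eq:
  fixes A B C D E F :: real
  assumes "B > 0" "C > 0" "D > 0"
    and e1: "(D + E) * C = (C + B) * D"
    and e2: "(D + E + F) * C = (C + B + A) * D"
    and e3: "(C + D) * B = (B + A) * C"
    and e4: "(E + F) * D = (D + C) * E"
  shows "C = D"
proof -
  have EC: "E * C = B * D" using e1 by (simp add: algebra_simps)
  have FD: "F * D = C * E" using e4 by (simp add: algebra_simps)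
  have DB: "D * B = A * C" using e3 by (simp add: algebra_simps)
  have FC: "F * C = A * D" using e2 EC by (simp add: algebra_simps)
  have "F = B" using EC FD \<open>D > 0\<close> by (metis mult.commute mult_right_cancel less_irrefl)
  then have "B * C * C = A * D * C" using FC by simp
  also have "\<dots> = B * D * D" using DB by (simp add: algebra_simps)
  finally have "C * C = D * D" using \<open>B > 0\<close> by (simp add: algebra_simps)
  then show ?thesis using \<open>C > 0\<close> \<open>D > 0\<close>
    by (metis abs_of_pos real_sqrt_abs2 power2_eq_square)
qed

lemma proportional_increments_midpoint_affine:
  fixes w :: "real \<Rightarrow> real"
  assumes incr: "strict_mono_on {0..1} w"
    and eq: "\<And>a1 c1 b c2 a2. 0 \<le> a1 \<Longrightarrow> a1 < c1 \<Longrightarrow> c1 < b \<Longrightarrow> b < c2 \<Longrightarrow>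
               c2 < a2 \<Longrightarrow> a2 \<le> 1 \<Longrightarrow> (a2 - b) * (b - c1) = (b - a1) * (c2 - b) \<Longrightarrow>
               (w a2 - w b) * (w b - w c1) = (w b - w a1) * (w c2 - w b)"
    and e: "0 < e" "0 \<le> c - 3 * e" "c + 3 * e \<le> 1"
  shows "w (c + e) + w (c - e) = 2 * w c"
proof -
  define A where "A = w (c - 2*e) - w (c - 3*e)"
  define B where "B = w (c - e) - w (c - 2*e)"
  define C where "C = w c - w (c - e)"
  define D where "D = w (c + e) - w c"
  define E where "E = w (c + 2*e) - w (c + e)"
  define F where "F = w (c + 3*e) - w (c + 2*e)"
  have mono: "\<And>x y. 0 \<le> x \<Longrightarrow> x < y \<Longrightarrow> y \<le> 1 \<Longrightarrow> w x < w y"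
    using incr by (auto intro: strict_mono_onD)
  have "C = D"
  proof (rule central_increments_eq)
    show "B > 0" "C > 0" "D > 0" unfolding B_def C_def D_def using mono e by auto
    show "(D + E) * C = (C + B) * D"
      using eq[of "c-2*e" "c-e" c "c+e" "c+2*e"] e
      unfolding B_def C_def D_def E_def by (auto simp: algebra_simps)
    show "(D + E + F) * C = (C + B + A) * D"
      using eq[of "c-3*e" "c-e" c "c+e" "c+3*e"] e
      unfolding A_def B_def C_def D_def E_def F_def by (auto simp: algebra_simps)
    show "(C + D) * B = (B + A) * C"
      using eq[of "c-3*e" "c-2*e" "c-e" c "c+e"] e
      unfolding A_def B_def C_def D_def by (auto simp: algebra_simps)
    show "(E + F) * D = (D + C) * E"
      using eq[of "c-e" c "c+e" "c+2*e" "c+3*e"] e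
      unfolding C_def D_def E_def F_def by (auto simp: algebra_simps)
  qed
  then show ?thesis unfolding C_def D_def by simp
qed

theorem lemma2:
  fixes w :: "real \<Rightarrow> real"
  assumes range: "\<And>p. p \<in> {0..1} \<Longrightarrow> w p \<in> {0..1}"
    and cont: "continuous_on {0..1} w"
    and incr: "strict_mono_on {0..1} w"
    and w0: "w 0 = 0" and w1: "w 1 = 1"
    and eq: "\<And>a1 c1 b c2 a2. 0 \<le> a1 \<Longrightarrow> a1 < c1 \<Longrightarrow> c1 < b \<Longrightarrow> b < c2 \<Longrightarrow>
               c2 < a2 \<Longrightarrow> a2 \<le> 1 \<Longrightarrow> (a2 - b) * (b - c1) = (b - a1) * (c2 - b) \<Longrightarrow>
               (w a2 - w b) * (w b - w c1) = (w b - w a1) * (w c2 - w b)"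
  shows "\<forall>p \<in> {0..1}. w p = p"
proof
  fix p :: real assume p: "p \<in> {0..1}"
  define g where "g x = w x - x" for x
  have "g p = 0"
  proof (rule local_midpoint_affine_eq_zero[OF _ _ _ _ p])
    show "continuous_on {0..1} g" unfolding g_def using cont by (intro continuous_intros)
    show "g 0 = 0" "g 1 = 0" unfolding g_def using w0 w1 by simp_all
    fix c :: real assume "0 < c" "c < 1"
    define e where "e = min c (1 - c) / 3"
    have e: "0 < e" "0 \<le> c - 3 * e" "c + 3 * e \<le> 1"
      using \<open>0 < c\<close> \<open>c < 1\<close> unfolding e_def by (auto simp: min_def split: if_split_asm)
    have "w (c + e) + w (c - e) = 2 * w c"
      by (rule proportional_increments_midpoint_affine[OF incr eq e])
    then have "g (c + e) + g (c - e) = 2 * g c"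
      unfolding g_def by (simp add: algebra_simps)
    with e show "\<exists>e>0. 0 \<le> c - e \<and> c + e \<le> 1 \<and> g (c + e) + g (c - e) = 2 * g c"
      by (intro exI[of _ e]) auto
  qed
  then show "w p = p" unfolding g_def by simp
qed

end
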